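(* Let $0<p<1$ and flip a coin showing heads (H) with probability $p$ and tails (T) with probability $1-p$ independently until a prescribed string $S$ first appears as consecutive flips; let $Y$ be the number of flips. Then for every integer $n\ge1$: if $S=\mathrm{H}^k$ with $k\ge1$, \[ E(Y^n) = \sum_{\pi\in\Pi_n} (-1)^{n-|\pi|} |\pi|! \prod_{B\in \pi} \sum_{i=1}^k \frac{i^{|B|} - (i-1)^{|B|}}{p^i}; \] if $S=\mathrm{H}^k\mathrm{T}^\ell$ with $k,\ell\ge1$, \[ E(Y^n) = \sum_{\pi\in\Pi_n} (-1)^{n-|\pi|} |\pi|! \prod_{B\in \pi} \frac{(k+\ell)^{|B|}-(k+\ell-1)^{|B|}}{p^k(1-p)^\ell}. \]
   Context: $\Pi_n$ is the set of set partitions of $\{1,\dots,n\}$; $|\pi|$ is the number of blocks of $\pi$ and $|B|$ the size of block $B$. Convention $0^0=1$. *)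

theory Defs
  imports "HOL-Probability.Probability" "HOL-Library.Disjoint_Sets"
begin

text \<open>Infinite sequence of independent coin flips; True = heads (probability p), False = tails.\<close>
definition coin_space :: "real \<Rightarrow> bool stream measure" where
  "coin_space p = stream_space (measure_pmf (bernoulli_pmf p))"

definition waiting_time :: "bool list \<Rightarrow> bool stream \<Rightarrow> nat" where
  "waiting_time S \<omega> = (LEAST m. length S \<le> m \<and> drop (m - length S) (stake m \<omega>) = S)"

definition set_partitions :: "nat \<Rightarrow> nat set set set" where
  "set_partitions n = {P. partition_on {1..n} P}"

end

theory Submission
  imports Defs "HOL-Computational_Algebra.Formal_Power_Series"
begin

(*
  Write N = length S and call i an overlap of S if 1 \<le> i \<le> N and the first i letters of S
  equal its last i letters. If S has not appeared by time m but is written at positions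
  m, ..., m + N - 1, then it first appears at a time m + i with i an overlap, and drop i S
  completes the copy. Taking probabilities gives Conway's renewal relation
  P(no occurrence by m) P(S) = \<Sum>\<^sub>i P(first occurrence at m + i) P(drop i S).
  Summing it against the increments of (m + N)^n and passing to the exponential generating
  function M(x) of the moments of the waiting time, one gets M (1 - A) = 1 with
  A(x) = \<Sum>\<^sub>i (e^((1-i)x) - e^(-ix)) / P(take i S). The coefficients of 1 / (1 - A) are
  sums over ordered set partitions, which is the formula; the overlaps of H^k are 1, ..., k
  and the only overlap of H^k T^l is k + l.
*)

section \<open>Ordered set partitions and exponential generating functions\<close>

definition ordered_partition_sum :: "(nat \<Rightarrow> real) \<Rightarrow> 'a set \<Rightarrow> real" where
  "ordered_partition_sum a A = (\<Sum>P\<in>{P. partition_on A P}. fact (card P) * (\<Prod>B\<in>P. a (card B)))"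

lemma ordered_partition_sum_empty [simp]: "ordered_partition_sum a {} = 1"
  by (simp add: ordered_partition_sum_def partition_on_empty)

lemma sum_partition_on_block_pairs:
  "(\<Sum>(P, B)\<in>(SIGMA P:{P. partition_on A P}. P). f B (P - {B})) =
    (\<Sum>(B, P)\<in>(SIGMA B:Pow A - {{}}. {P. partition_on (A - B) P}). f B P)"
proof (rule sum.reindex_bij_witness[where j = "\<lambda>(P, B). (B, P - {B})" and i = "\<lambda>(B, P). (insert B P, B)"])
  fix PB assume "PB \<in> (SIGMA P:{P. partition_on A P}. P)"
  then obtain P B where PB: "PB = (P, B)" and P: "partition_on A P" and "B \<in> P" by auto
  then have "disjnt B (\<Union>(P - {B}))" and "P = insert B (P - {B})"
    by (auto simp: partition_on_def disjnt_def disjoint_def)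
  then have "partition_on (A - B) (P - {B}) \<and> B \<subseteq> A \<and> B \<noteq> {}"
    using partition_on_insert P by metis
  then show "(case PB of (P, B) \<Rightarrow> (B, P - {B})) \<in> (SIGMA B:Pow A - {{}}. {P. partition_on (A - B) P})"
    using PB by auto
  show "(case case PB of (P, B) \<Rightarrow> (B, P - {B}) of (B, P) \<Rightarrow> (insert B P, B)) = PB"
    using PB \<open>B \<in> P\<close> by auto
next
  fix BP assume "BP \<in> (SIGMA B:Pow A - {{}}. {P. partition_on (A - B) P})"
  then obtain B P where BP: "BP = (B, P)" and "B \<subseteq> A" "B \<noteq> {}" and P: "partition_on (A - B) P"
    by auto
  then have "disjnt B (\<Union>P)" and "B \<notin> P"
    by (auto simp: partition_on_def disjnt_def)
  then show "(case case BP of (B, P) \<Rightarrow> (insert B P, B) of (P, B) \<Rightarrow> (B, P - {B})) = BP"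
    and "(case BP of (B, P) \<Rightarrow> (insert B P, B)) \<in> (SIGMA P:{P. partition_on A P}. P)"
    using BP partition_on_insert \<open>B \<subseteq> A\<close> \<open>B \<noteq> {}\<close> P by auto
qed auto

text \<open>\<open>fact (card P)\<close> counts the orderings of the blocks of \<open>P\<close>; an ordered partition is a
  first block followed by an ordered partition of the rest.\<close>

lemma ordered_partition_sum_first_block:
  assumes "finite A" and "A \<noteq> {}"
  shows "ordered_partition_sum a A = (\<Sum>B\<in>Pow A - {{}}. a (card B) * ordered_partition_sum a (A - B))"
proof -
  define w where "w B P = a (card B) * (fact (card P) * (\<Prod>C\<in>P. a (card C)))" for B :: "'a set" and P :: "'a set set"
  have split_block: "fact (card P) * (\<Prod>B\<in>P. a (card B)) = (\<Sum>B\<in>P. w B (P - {B}))"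
    if P: "partition_on A P" for P
  proof -
    have "finite P" using finite_elements[OF \<open>finite A\<close> P] .
    moreover have "P \<noteq> {}" using P \<open>A \<noteq> {}\<close> by (auto simp: partition_on_def)
    ultimately obtain m where m: "card P = Suc m" by (cases "card P") auto
    have "w B (P - {B}) = fact m * (\<Prod>B\<in>P. a (card B))" if "B \<in> P" for B
      using that \<open>finite P\<close> m by (simp add: w_def prod.remove[of P B] card_Diff_singleton)
    then show ?thesis using m by simp
  qed
  have "ordered_partition_sum a A = (\<Sum>P\<in>{P. partition_on A P}. \<Sum>B\<in>P. w B (P - {B}))"
    unfolding ordered_partition_sum_def by (rule sum.cong) (auto simp: split_block)
  also have "\<dots> = (\<Sum>(P, B)\<in>(SIGMA P:{P. partition_on A P}. P). w B (P - {B}))"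
    by (rule sum.Sigma) (auto intro: finitely_many_partition_on assms finite_elements)
  also have "\<dots> = (\<Sum>(B, P)\<in>(SIGMA B:Pow A - {{}}. {P. partition_on (A - B) P}). w B P)"
    by (rule sum_partition_on_block_pairs)
  also have "\<dots> = (\<Sum>B\<in>Pow A - {{}}. \<Sum>P\<in>{P. partition_on (A - B) P}. w B P)"
    by (rule sum.Sigma[symmetric]) (auto intro: finitely_many_partition_on assms)
  also have "\<dots> = (\<Sum>B\<in>Pow A - {{}}. a (card B) * ordered_partition_sum a (A - B))"
    by (simp add: w_def ordered_partition_sum_def sum_distrib_left)
  finally show ?thesis .
qed

lemma ordered_partition_sum_first_block_card:
  assumes "finite A" and "A \<noteq> {}"
    and "\<And>B. B \<subseteq> A \<Longrightarrow> B \<noteq> {} \<Longrightarrow> ordered_partition_sum a (A - B) = Q (card A - card B)"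
  shows "ordered_partition_sum a A = (\<Sum>j=1..card A. of_nat (card A choose j) * a j * Q (card A - j))"
proof -
  have card_range: "card ` (Pow A - {{}}) \<subseteq> {1..card A}"
  proof (rule image_subsetI)
    fix B assume "B \<in> Pow A - {{}}"
    with assms(1) have "B \<subseteq> A" "B \<noteq> {}" "finite B" by (auto intro: finite_subset)
    with assms(1) show "card B \<in> {1..card A}" by (auto simp: Suc_le_eq card_gt_0_iff card_mono)
  qed
  have "ordered_partition_sum a A = (\<Sum>B\<in>Pow A - {{}}. a (card B) * Q (card A - card B))"
    using ordered_partition_sum_first_block[OF assms(1,2)] assms(3) by (auto intro!: sum.cong)
  also have "\<dots> = (\<Sum>j=1..card A. \<Sum>B\<in>{B \<in> Pow A - {{}}. card B = j}. a (card B) * Q (card A - card B))"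
    using assms(1) card_range by (intro sum.group[symmetric]) auto
  also have "\<dots> = (\<Sum>j=1..card A. of_nat (card A choose j) * a j * Q (card A - j))"
  proof (rule sum.cong[OF refl])
    fix j assume "j \<in> {1..card A}"
    then have "{B \<in> Pow A - {{}}. card B = j} = {B. B \<subseteq> A \<and> card B = j}" by auto
    then show "(\<Sum>B\<in>{B \<in> Pow A - {{}}. card B = j}. a (card B) * Q (card A - card B)) =
        of_nat (card A choose j) * a j * Q (card A - j)"
      using n_subsets[OF assms(1), of j] by simp
  qed
  finally show ?thesis .
qed

lemma ordered_partition_sum_card:
  "finite (A :: nat set) \<Longrightarrow> ordered_partition_sum a A = ordered_partition_sum a {1..card A}"
proof (induction "card A" arbitrary: A rule: less_induct)
  case less
  define Q where "Q m = ordered_partition_sum a {1..m}" for m :: nat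
  have rec: "ordered_partition_sum a X = (\<Sum>j=1..card X. of_nat (card X choose j) * a j * Q (card X - j))"
    if "finite X" "X \<noteq> {}" "card X = card A" for X :: "nat set"
  proof (rule ordered_partition_sum_first_block_card[OF that(1,2)])
    fix B assume "B \<subseteq> X" "B \<noteq> {}"
    moreover from this have "finite B"
      using \<open>finite X\<close> finite_subset by blast
    ultimately have "card (X - B) = card X - card B" and "0 < card B"
      by (auto simp: card_Diff_subset card_gt_0_iff)
    with \<open>B \<subseteq> X\<close> \<open>B \<noteq> {}\<close> show "ordered_partition_sum a (X - B) = Q (card X - card B)"
      using less.hyps[of "X - B"] that card_mono[OF that(1) \<open>B \<subseteq> X\<close>] by (simp add: Q_def)
  qed
  show ?case
    using rec[of A] rec[of "{1..card A}"] less.prems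
    by (cases "A = {}") (simp_all add: card_gt_0_iff Suc_le_eq)
qed

lemma ordered_partition_sum_recurrence:
  assumes "n \<ge> 1"
  shows "ordered_partition_sum a {1..n} =
    (\<Sum>j=1..n. of_nat (n choose j) * a j * ordered_partition_sum a {1..n - j})"
proof -
  have "ordered_partition_sum a ({1..n} - B) = ordered_partition_sum a {1..n - card B}"
    if "B \<subseteq> {1..n}" for B
  proof -
    have "finite B" using that finite_subset by blast
    then show ?thesis
      using ordered_partition_sum_card[of "{1..n} - B" a] that by (simp add: card_Diff_subset)
  qed
  then show ?thesis
    using ordered_partition_sum_first_block_card[of "{1..n}" a "\<lambda>m. ordered_partition_sum a {1..m}"] assms
    by simp
qed

lemma ordered_partition_sum_alternating:
  "(\<Sum>P\<in>set_partitions n. (-1) ^ (n - card P) * fact (card P) * (\<Prod>B\<in>P. G (card B))) =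
    ordered_partition_sum (\<lambda>j. (-1) ^ (j - 1) * G j) {1..n}"
  unfolding ordered_partition_sum_def set_partitions_def
proof (rule sum.cong[OF refl])
  fix P assume "P \<in> {P. partition_on {1..n} P}"
  then have P: "partition_on {1..n} P" by simp
  have "finite P" using finite_elements[OF _ P] by simp
  have fin: "finite B" and pos: "1 \<le> card B" if "B \<in> P" for B
    using P that by (auto simp: partition_on_def Suc_le_eq card_gt_0_iff intro: finite_subset)
  have "sum card P = n"
    using card_Union_disjoint[of P] P fin by (auto simp: partition_on_def)
  then have "(\<Sum>B\<in>P. card B - 1) = n - card P"
    using pos sum_subtractf_nat[of P "\<lambda>_. 1" card] by simp
  then have "(-1 :: real) ^ (n - card P) = (\<Prod>B\<in>P. (-1) ^ (card B - 1))"
    by (metis power_sum)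
  then show "(-1) ^ (n - card P) * fact (card P) * (\<Prod>B\<in>P. G (card B)) =
      fact (card P) * (\<Prod>B\<in>P. (-1) ^ (card B - 1) * G (card B))"
    by (simp add: prod.distrib)
qed

definition egf :: "(nat \<Rightarrow> real) \<Rightarrow> real fps" where
  "egf x = Abs_fps (\<lambda>n. x n / fact n)"

lemma egf_nth [simp]: "fps_nth (egf x) n = x n / fact n"
  by (simp add: egf_def)

lemma egf_inject: "egf x = egf y \<longleftrightarrow> x = y"
  by (auto simp: fps_eq_iff fun_eq_iff)

lemma egf_mult: "egf x * egf y = egf (\<lambda>n. \<Sum>j\<le>n. real (n choose j) * x j * y (n - j))"
proof (rule fps_ext)
  fix n
  have "fps_nth (egf x * egf y) n = (\<Sum>j\<le>n. real (n choose j) * x j * y (n - j) / fact n)"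
    unfolding fps_mult_nth atLeast0AtMost
    by (rule sum.cong) (auto simp: binomial_fact field_simps)
  then show "fps_nth (egf x * egf y) n = fps_nth (egf (\<lambda>n. \<Sum>j\<le>n. real (n choose j) * x j * y (n - j))) n"
    by (simp add: sum_divide_distrib)
qed

lemma fps_exp_eq_egf: "fps_exp c = egf (\<lambda>n. c ^ n)"
  by (rule fps_ext) simp

text \<open>If \<open>x j\<close> is the \<open>j\<close>-th moment of a random variable \<open>Y\<close>, then \<open>moment_shift x c n\<close> is
  the \<open>n\<close>-th moment of \<open>Y + c\<close>.\<close>

definition moment_shift :: "(nat \<Rightarrow> real) \<Rightarrow> real \<Rightarrow> nat \<Rightarrow> real" where
  "moment_shift x c n = (\<Sum>j\<le>n. real (n choose j) * x j * c ^ (n - j))"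

lemma egf_mult_fps_exp: "egf x * fps_exp c = egf (moment_shift x c)"
  by (simp add: fps_exp_eq_egf egf_mult moment_shift_def[abs_def])

lemma egf_ordered_partition_sum:
  assumes "a 0 = 0"
  shows "egf (\<lambda>n. ordered_partition_sum a {1..n}) * (1 - egf a) = 1"
proof -
  have "egf (\<lambda>n. ordered_partition_sum a {1..n}) = 1 + egf a * egf (\<lambda>n. ordered_partition_sum a {1..n})"
  proof (rule fps_ext)
    fix n
    show "fps_nth (egf (\<lambda>n. ordered_partition_sum a {1..n})) n =
        fps_nth (1 + egf a * egf (\<lambda>n. ordered_partition_sum a {1..n})) n"
    proof (cases "n = 0")
      case False
      have "(\<Sum>j\<le>n. real (n choose j) * a j * ordered_partition_sum a {1..n - j}) =
          (\<Sum>j=1..n. real (n choose j) * a j * ordered_partition_sum a {1..n - j})"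
        using assms by (simp add: atMost_atLeast0 sum.atLeast_Suc_atMost)
      then show ?thesis
        using False ordered_partition_sum_recurrence[of n a] by (simp add: egf_mult)
    qed (simp add: assms)
  qed
  then show ?thesis by (simp add: algebra_simps)
qed

section \<open>Occurrences of a word\<close>

definition matches_at :: "'a list \<Rightarrow> (nat \<Rightarrow> 'a) \<Rightarrow> nat \<Rightarrow> bool" where
  "matches_at xs x m \<longleftrightarrow> (\<forall>t<length xs. x (m + t) = xs ! t)"

text \<open>\<open>occurs_at S x j\<close>: the word \<open>S\<close> occupies positions \<open>j - length S, \<dots>, j - 1\<close>,
  so it has appeared after \<open>j\<close> flips.\<close>

definition occurs_at :: "'a list \<Rightarrow> (nat \<Rightarrow> 'a) \<Rightarrow> nat \<Rightarrow> bool" where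
  "occurs_at S x j \<longleftrightarrow> length S \<le> j \<and> matches_at S x (j - length S)"

definition first_occurrence :: "'a list \<Rightarrow> (nat \<Rightarrow> 'a) \<Rightarrow> nat \<Rightarrow> bool" where
  "first_occurrence S x j \<longleftrightarrow> occurs_at S x j \<and> (\<forall>i<j. \<not> occurs_at S x i)"

definition no_occurrence_upto :: "'a list \<Rightarrow> (nat \<Rightarrow> 'a) \<Rightarrow> nat \<Rightarrow> bool" where
  "no_occurrence_upto S x m \<longleftrightarrow> (\<forall>i\<le>m. \<not> occurs_at S x i)"

definition overlaps :: "'a list \<Rightarrow> nat set" where
  "overlaps S = {i \<in> {1..length S}. take i S = drop (length S - i) S}"

lemma finite_overlaps [simp]: "finite (overlaps S)"
  by (simp add: overlaps_def)

lemma waiting_time_eq_Least: "waiting_time S \<omega> = (LEAST j. occurs_at S (snth \<omega>) j)"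
proof -
  have "drop (j - length S) (stake j \<omega>) = S \<longleftrightarrow> matches_at S (snth \<omega>) (j - length S)"
    if "length S \<le> j" for j
    using that by (auto simp: matches_at_def list_eq_iff_nth_eq)
  then show ?thesis
    unfolding waiting_time_def occurs_at_def by metis
qed

lemma occurs_at_cong:
  "i \<le> j \<Longrightarrow> (\<And>t. t < j \<Longrightarrow> x t = y t) \<Longrightarrow> occurs_at S x i \<longleftrightarrow> occurs_at S y i"
  by (auto simp: occurs_at_def matches_at_def)

lemma first_occurrence_cong:
  "(\<And>t. t < j \<Longrightarrow> x t = y t) \<Longrightarrow> first_occurrence S x j \<longleftrightarrow> first_occurrence S y j"
  using occurs_at_cong[of _ j x y S] by (auto simp: first_occurrence_def)

lemma no_occurrence_upto_cong:
  "(\<And>t. t < m \<Longrightarrow> x t = y t) \<Longrightarrow> no_occurrence_upto S x m \<longleftrightarrow> no_occurrence_upto S y m"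
  using occurs_at_cong[of _ m x y S] by (auto simp: no_occurrence_upto_def)

lemma first_occurrence_unique:
  "first_occurrence S x i \<Longrightarrow> first_occurrence S x j \<Longrightarrow> i = j"
  by (metis first_occurrence_def linorder_neqE_nat)

lemma first_occurrence_iff_Least:
  "\<exists>j. occurs_at S x j \<Longrightarrow> first_occurrence S x j \<longleftrightarrow> j = (LEAST j. occurs_at S x j)"
  unfolding first_occurrence_def by (metis LeastI Least_le not_less_Least le_antisym not_le)

lemma no_occurrence_upto_iff_less_Least:
  "\<exists>j. occurs_at S x j \<Longrightarrow> no_occurrence_upto S x m \<longleftrightarrow> m < (LEAST j. occurs_at S x j)"
  unfolding no_occurrence_upto_def by (metis LeastI not_less_Least le_trans not_le)

lemma length_le_Least_occurs_at:
  "\<exists>j. occurs_at S x j \<Longrightarrow> length S \<le> (LEAST j. occurs_at S x j)"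
  by (metis LeastI occurs_at_def)

lemma first_occurrence_overlap_if_matches_at:
  assumes no: "no_occurrence_upto S x m" and "matches_at S x m"
  shows "\<exists>i\<in>overlaps S. first_occurrence S x (m + i) \<and> matches_at (drop i S) x (m + i)"
proof -
  have at_m: "\<And>t. t < length S \<Longrightarrow> x (m + t) = S ! t"
    using \<open>matches_at S x m\<close> by (simp add: matches_at_def)
  have "occurs_at S x (m + length S)"
    using at_m by (simp add: occurs_at_def matches_at_def)
  then have ex: "\<exists>j. occurs_at S x j" ..
  define Y where "Y = (LEAST j. occurs_at S x j)"
  have "Y \<le> m + length S"
    unfolding Y_def using \<open>occurs_at S x (m + length S)\<close> by (rule Least_le)
  moreover have "m < Y"
    using no no_occurrence_upto_iff_less_Least[OF ex] by (simp add: Y_def)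
  moreover have at_Y: "length S \<le> Y" "\<And>s. s < length S \<Longrightarrow> x (Y - length S + s) = S ! s"
    using LeastI_ex[OF ex] by (auto simp: Y_def occurs_at_def matches_at_def)
  ultimately have "take (Y - m) S = drop (length S - (Y - m)) S"
    using at_m[of "_"] at_Y(2)[of "length S - (Y - m) + _"]
    by (auto simp: list_eq_iff_nth_eq algebra_simps)
  moreover have "matches_at (drop (Y - m) S) x Y"
    using at_m[of "Y - m + _"] \<open>m < Y\<close> \<open>Y \<le> m + length S\<close> by (auto simp: matches_at_def algebra_simps)
  moreover have "first_occurrence S x Y"
    using first_occurrence_iff_Least[OF ex] by (simp add: Y_def)
  ultimately show ?thesis
    using \<open>m < Y\<close> \<open>Y \<le> m + length S\<close>
    by (intro bexI[of _ "Y - m"]) (auto simp: overlaps_def)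
qed

lemma matches_at_if_first_occurrence_overlap:
  assumes "i \<in> overlaps S" and first: "first_occurrence S x (m + i)"
    and rest: "matches_at (drop i S) x (m + i)"
  shows "no_occurrence_upto S x m \<and> matches_at S x m"
proof -
  have i: "1 \<le> i" "i \<le> length S" and overlap: "take i S = drop (length S - i) S"
    using \<open>i \<in> overlaps S\<close> by (auto simp: overlaps_def)
  have "no_occurrence_upto S x m"
    using first i by (auto simp: first_occurrence_def no_occurrence_upto_def)
  moreover have "x (m + t) = S ! t" if "t < length S" for t
  proof (cases "t < i")
    case True
    have "length S \<le> m + i" and at_mi: "\<And>s. s < length S \<Longrightarrow> x (m + i - length S + s) = S ! s"
      using first by (auto simp: first_occurrence_def occurs_at_def matches_at_def)
    then have "x (m + t) = S ! (length S - i + t)"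
      using at_mi[of "length S - i + t"] True i by simp
    also have "\<dots> = S ! t"
      using arg_cong[OF overlap, of "\<lambda>xs. xs ! t"] True i by simp
    finally show ?thesis .
  next
    case False
    then show ?thesis
      using rest that by (auto simp: matches_at_def dest!: spec[of _ "t - i"])
  qed
  ultimately show ?thesis
    by (simp add: matches_at_def)
qed

lemma no_occurrence_upto_matches_at_iff:
  "no_occurrence_upto S x m \<and> matches_at S x m \<longleftrightarrow>
    (\<exists>i\<in>overlaps S. first_occurrence S x (m + i) \<and> matches_at (drop i S) x (m + i))"
  using first_occurrence_overlap_if_matches_at matches_at_if_first_occurrence_overlap by blast

lemma overlaps_replicate: "overlaps (replicate k x) = {1..k}"
  by (auto simp: overlaps_def)

lemma overlaps_replicate_append_replicate:
  assumes "x \<noteq> y" and "1 \<le> k" and "1 \<le> l"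
  shows "overlaps (replicate k x @ replicate l y) = {k + l}"
proof -
  let ?S = "replicate k x @ replicate l y"
  have nth_S: "?S ! t = (if t < k then x else y)" if "t < k + l" for t
    using that by (simp add: nth_append)
  have "i = k + l" if "i \<in> overlaps ?S" for i
  proof (rule ccontr)
    assume "i \<noteq> k + l"
    with that have i: "1 \<le> i" "i < k + l" and overlap: "take i ?S = drop (k + l - i) ?S"
      by (auto simp: overlaps_def)
    have shift: "?S ! t = ?S ! (k + l - i + t)" if "t < i" for t
    proof -
      have "?S ! t = take i ?S ! t" using that by (rule nth_take[symmetric])
      also have "\<dots> = drop (k + l - i) ?S ! t" by (simp only: overlap)
      also have "\<dots> = ?S ! (k + l - i + t)" by (rule nth_drop) simp
      finally show ?thesis .
    qed
    have "k + l - i < k"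
      using shift[of 0] nth_S[of 0] nth_S[of "k + l - i"] i assms by (auto split: if_splits)
    then have "k + l - i + (i - l) = k" and "i - l < i" and "i - l < k"
      using i assms by auto
    then show False
      using shift[of "i - l"] nth_S[of "i - l"] nth_S[of k] assms by simp
  qed
  moreover have "k + l \<in> overlaps ?S"
    using assms by (simp add: overlaps_def)
  ultimately show ?thesis by blast
qed

section \<open>Coin flips\<close>

definition word_prob :: "real \<Rightarrow> bool list \<Rightarrow> real" where
  "word_prob p xs = (\<Prod>b\<leftarrow>xs. if b then p else 1 - p)"

lemma word_prob_append: "word_prob p (xs @ ys) = word_prob p xs * word_prob p ys"
  by (simp add: word_prob_def)

lemma of_bool_Bex_eq_sum:
  assumes "finite I" and "\<And>i j. i \<in> I \<Longrightarrow> j \<in> I \<Longrightarrow> Q i \<Longrightarrow> Q j \<Longrightarrow> i = j"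
  shows "of_bool (\<exists>i\<in>I. Q i) = (\<Sum>i\<in>I. of_bool (Q i) :: 'a :: semiring_1)"
proof (cases "\<exists>i\<in>I. Q i")
  case True
  then obtain i where "i \<in> I" "Q i" by blast
  with assms(2) have "I \<inter> {i. Q i} = {i}" by blast
  with True show ?thesis using assms(1) by simp
qed (use assms(1) in auto)

lemma measurable_matches_at [measurable]:
  "Measurable.pred (stream_space (count_space UNIV)) (\<lambda>\<omega>. matches_at xs (snth \<omega>) m)"
  unfolding matches_at_def by measurable

lemma measurable_occurs_at [measurable]:
  "Measurable.pred (stream_space (count_space UNIV)) (\<lambda>\<omega>. occurs_at S (snth \<omega>) j)"
  unfolding occurs_at_def by measurable

lemma measurable_first_occurrence [measurable]:
  "Measurable.pred (stream_space (count_space UNIV)) (\<lambda>\<omega>. first_occurrence S (snth \<omega>) j)"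
  unfolding first_occurrence_def by measurable

lemma measurable_no_occurrence_upto [measurable]:
  "Measurable.pred (stream_space (count_space UNIV)) (\<lambda>\<omega>. no_occurrence_upto S (snth \<omega>) m)"
  unfolding no_occurrence_upto_def by measurable

locale coin_flips =
  fixes p :: real
  assumes p_pos: "0 < p" and p_less_1: "p < 1"
begin

lemma word_prob_pos: "0 < word_prob p xs"
  using p_pos p_less_1 by (induction xs) (auto simp: word_prob_def)

lemma word_prob_le_1: "word_prob p xs \<le> 1"
proof (induction xs)
  case (Cons b xs)
  then show ?case
    using p_pos p_less_1 word_prob_pos[of xs] by (auto simp: word_prob_def intro: mult_le_one)
qed (simp add: word_prob_def)

lemma sets_coin_space [measurable_cong]: "sets (coin_space p) = sets (stream_space (count_space UNIV))"
  unfolding coin_space_def by (rule sets_stream_space_cong) simp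

lemma space_coin_space [simp]: "space (coin_space p) = UNIV"
  by (simp add: coin_space_def space_stream_space)

sublocale prob_space "coin_space p"
  unfolding coin_space_def by (rule prob_space.prob_space_stream_space[OF prob_space_measure_pmf])

lemma measurable_waiting_time [measurable]:
  "waiting_time S \<in> measurable (coin_space p) (count_space UNIV)"
  unfolding waiting_time_eq_Least[abs_def] by measurable

lemma nn_integral_of_bool_le_1: "(\<integral>\<^sup>+\<omega>. of_bool (Q \<omega>) \<partial>coin_space p) \<le> 1"
proof -
  have "(\<integral>\<^sup>+\<omega>. of_bool (Q \<omega>) \<partial>coin_space p) \<le> (\<integral>\<^sup>+\<omega>. 1 \<partial>coin_space p)"
    by (rule nn_integral_mono) simp
  then show ?thesis by (simp add: emeasure_space_1[simplified])
qed

lemma nn_integral_coin_space_Cons: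
  assumes "f \<in> borel_measurable (coin_space p)"
  shows "(\<integral>\<^sup>+\<omega>. f \<omega> \<partial>coin_space p) =
    (\<integral>\<^sup>+\<omega>. f (True ## \<omega>) \<partial>coin_space p) * p + (\<integral>\<^sup>+\<omega>. f (False ## \<omega>) \<partial>coin_space p) * (1 - p)"
  using prob_space.nn_integral_stream_space[OF prob_space_measure_pmf, of f "bernoulli_pmf p"]
    assms p_pos p_less_1
  by (simp add: coin_space_def)

lemma nn_integral_stake_sdrop:
  fixes f :: "bool list \<Rightarrow> ennreal"
  assumes [measurable]: "g \<in> borel_measurable (coin_space p)"
  shows "(\<integral>\<^sup>+\<omega>. f (stake m \<omega>) * g (sdrop m \<omega>) \<partial>coin_space p) =
    (\<integral>\<^sup>+\<omega>. f (stake m \<omega>) \<partial>coin_space p) * (\<integral>\<^sup>+\<omega>. g \<omega> \<partial>coin_space p)"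
proof (induction m arbitrary: f)
  case 0
  then show ?case by (simp add: nn_integral_cmult emeasure_space_1[simplified])
next
  case (Suc m)
  have "(\<integral>\<^sup>+\<omega>. f (stake (Suc m) \<omega>) * g (sdrop (Suc m) \<omega>) \<partial>coin_space p) =
      (\<integral>\<^sup>+\<omega>. f (True # stake m \<omega>) * g (sdrop m \<omega>) \<partial>coin_space p) * p +
      (\<integral>\<^sup>+\<omega>. f (False # stake m \<omega>) * g (sdrop m \<omega>) \<partial>coin_space p) * (1 - p)"
    by (subst nn_integral_coin_space_Cons) simp_all
  also have "\<dots> = ((\<integral>\<^sup>+\<omega>. f (True # stake m \<omega>) \<partial>coin_space p) * p +
      (\<integral>\<^sup>+\<omega>. f (False # stake m \<omega>) \<partial>coin_space p) * (1 - p)) * (\<integral>\<^sup>+\<omega>. g \<omega> \<partial>coin_space p)"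
    by (simp only: Suc.IH[of "\<lambda>xs. f (True # xs)"] Suc.IH[of "\<lambda>xs. f (False # xs)"])
      (simp add: algebra_simps)
  also have "(\<integral>\<^sup>+\<omega>. f (True # stake m \<omega>) \<partial>coin_space p) * p +
      (\<integral>\<^sup>+\<omega>. f (False # stake m \<omega>) \<partial>coin_space p) * (1 - p) =
      (\<integral>\<^sup>+\<omega>. f (stake (Suc m) \<omega>) \<partial>coin_space p)"
    by (subst (2) nn_integral_coin_space_Cons) simp_all
  finally show ?case .
qed

lemma nn_integral_matches_at_0:
  "(\<integral>\<^sup>+\<omega>. of_bool (matches_at xs (snth \<omega>) 0) \<partial>coin_space p) = ennreal (word_prob p xs)"
proof (induction xs)
  case Nil
  then show ?case by (simp add: matches_at_def word_prob_def emeasure_space_1[simplified])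
next
  case (Cons b xs)
  have Cons_matches: "matches_at (a # xs) (snth (c ## \<omega>)) 0 \<longleftrightarrow> c = a \<and> matches_at xs (snth \<omega>) 0"
    for a c \<omega>
    by (auto simp: matches_at_def less_Suc_eq_0_disj)
  show ?case
    using Cons.IH p_pos p_less_1 word_prob_pos[of xs]
    by (subst nn_integral_coin_space_Cons, measurable)
      (cases b; simp add: Cons_matches word_prob_def ennreal_mult mult.commute)
qed

lemma nn_integral_prefix_event_matches_at:
  "(\<integral>\<^sup>+\<omega>. of_bool (A (stake m \<omega>) \<and> matches_at xs (snth \<omega>) m) \<partial>coin_space p) =
    (\<integral>\<^sup>+\<omega>. of_bool (A (stake m \<omega>)) \<partial>coin_space p) * ennreal (word_prob p xs)"
proof -
  have "matches_at xs (snth \<omega>) m \<longleftrightarrow> matches_at xs (snth (sdrop m \<omega>)) 0" for \<omega>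
    by (simp add: matches_at_def sdrop_snth add.commute)
  then show ?thesis
    using nn_integral_stake_sdrop[of "\<lambda>\<omega>. of_bool (matches_at xs (snth \<omega>) 0)" "\<lambda>ys. of_bool (A ys)" m]
    by (simp add: nn_integral_matches_at_0 of_bool_conj)
qed

definition first_occurrence_prob :: "bool list \<Rightarrow> nat \<Rightarrow> ennreal" where
  "first_occurrence_prob S j = (\<integral>\<^sup>+\<omega>. of_bool (first_occurrence S (snth \<omega>) j) \<partial>coin_space p)"

definition no_occurrence_prob :: "bool list \<Rightarrow> nat \<Rightarrow> ennreal" where
  "no_occurrence_prob S m = (\<integral>\<^sup>+\<omega>. of_bool (no_occurrence_upto S (snth \<omega>) m) \<partial>coin_space p)"

lemma no_occurrence_prob_matches_at:
  "(\<integral>\<^sup>+\<omega>. of_bool (no_occurrence_upto S (snth \<omega>) m \<and> matches_at xs (snth \<omega>) m) \<partial>coin_space p) =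
    no_occurrence_prob S m * ennreal (word_prob p xs)"
proof -
  have "no_occurrence_upto S (snth \<omega>) m \<longleftrightarrow> no_occurrence_upto S ((!) (stake m \<omega>)) m" for \<omega>
    by (rule no_occurrence_upto_cong) simp
  then show ?thesis
    using nn_integral_prefix_event_matches_at[of "\<lambda>ys. no_occurrence_upto S ((!) ys) m" m xs]
    by (simp add: no_occurrence_prob_def)
qed

lemma first_occurrence_prob_matches_at:
  "(\<integral>\<^sup>+\<omega>. of_bool (first_occurrence S (snth \<omega>) j \<and> matches_at xs (snth \<omega>) j) \<partial>coin_space p) =
    first_occurrence_prob S j * ennreal (word_prob p xs)"
proof -
  have "first_occurrence S (snth \<omega>) j \<longleftrightarrow> first_occurrence S ((!) (stake j \<omega>)) j" for \<omega>
    by (rule first_occurrence_cong) simp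
  then show ?thesis
    using nn_integral_prefix_event_matches_at[of "\<lambda>ys. first_occurrence S ((!) ys) j" j xs]
    by (simp add: first_occurrence_prob_def)
qed

lemma no_occurrence_prob_renewal:
  "no_occurrence_prob S m * ennreal (word_prob p S) =
    (\<Sum>i\<in>overlaps S. first_occurrence_prob S (m + i) * ennreal (word_prob p (drop i S)))"
proof -
  have "no_occurrence_prob S m * ennreal (word_prob p S) =
      (\<integral>\<^sup>+\<omega>. (\<Sum>i\<in>overlaps S. of_bool (first_occurrence S (snth \<omega>) (m + i) \<and>
        matches_at (drop i S) (snth \<omega>) (m + i))) \<partial>coin_space p)"
    unfolding no_occurrence_prob_matches_at[symmetric] no_occurrence_upto_matches_at_iff
    by (intro nn_integral_cong of_bool_Bex_eq_sum) (auto simp: overlaps_def dest: first_occurrence_unique)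
  also have "\<dots> = (\<Sum>i\<in>overlaps S. first_occurrence_prob S (m + i) * ennreal (word_prob p (drop i S)))"
    by (subst nn_integral_sum) (simp_all add: first_occurrence_prob_matches_at)
  finally show ?thesis .
qed

lemma no_occurrence_prob_step:
  "no_occurrence_prob S (m + length S) + no_occurrence_prob S m * ennreal (word_prob p S) \<le>
    no_occurrence_prob S m"
proof -
  have "no_occurrence_prob S (m + length S) + no_occurrence_prob S m * ennreal (word_prob p S) =
      (\<integral>\<^sup>+\<omega>. of_bool (no_occurrence_upto S (snth \<omega>) (m + length S)) +
        of_bool (no_occurrence_upto S (snth \<omega>) m \<and> matches_at S (snth \<omega>) m) \<partial>coin_space p)"
    unfolding no_occurrence_prob_matches_at[symmetric] unfolding no_occurrence_prob_def
    by (rule nn_integral_add[symmetric]) simp_all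
  also have "\<dots> \<le> no_occurrence_prob S m"
    unfolding no_occurrence_prob_def
    by (rule nn_integral_mono)
      (auto simp: no_occurrence_upto_def occurs_at_def dest: spec[of _ "m + length S"])
  finally show ?thesis .
qed

lemma no_occurrence_prob_geometric:
  "no_occurrence_prob S (j * length S) \<le> ennreal ((1 - word_prob p S) ^ j)"
proof -
  define W where "W = word_prob p S"
  define r where "r m = enn2real (no_occurrence_prob S m)" for m
  have r_eq: "no_occurrence_prob S m = ennreal (r m)" for m
    unfolding r_def no_occurrence_prob_def
    by (metis ennreal_enn2real ennreal_one_less_top le_less_trans nn_integral_of_bool_le_1)
  have r_nonneg: "0 \<le> r m" for m by (simp add: r_def)
  have r_step: "r (m + length S) \<le> (1 - W) * r m" for m
  proof -
    have "ennreal (r (m + length S) + r m * W) \<le> ennreal (r m)"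
      using no_occurrence_prob_step[of S m] word_prob_pos[of S]
      by (simp add: r_eq W_def r_nonneg ennreal_mult)
    then show ?thesis using r_nonneg by (simp add: ennreal_le_iff algebra_simps)
  qed
  have "r (j * length S) \<le> (1 - W) ^ j"
  proof (induction j)
    case 0
    show ?case
      using nn_integral_of_bool_le_1 by (simp add: r_def no_occurrence_prob_def enn2real_leI)
  next
    case (Suc j)
    have "r (Suc j * length S) \<le> (1 - W) * r (j * length S)"
      using r_step[of "j * length S"] by (simp add: add.commute)
    also have "\<dots> \<le> (1 - W) ^ Suc j"
      using Suc word_prob_le_1[of S] by (simp add: W_def mult_left_mono)
    finally show ?case .
  qed
  then show ?thesis
    unfolding r_eq W_def by (rule ennreal_leI)
qed

lemma AE_occurs: "AE \<omega> in coin_space p. \<exists>j. occurs_at S (snth \<omega>) j"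
proof -
  define N where "N = {\<omega> \<in> space (coin_space p). \<not> (\<exists>j. occurs_at S (snth \<omega>) j)}"
  have [measurable]: "N \<in> sets (coin_space p)"
    unfolding N_def by measurable
  have prob_N: "prob N \<le> (1 - word_prob p S) ^ j" for j
  proof -
    have "emeasure (coin_space p) N \<le> no_occurrence_prob S (j * length S)"
      unfolding no_occurrence_prob_def nn_integral_indicator[symmetric, OF \<open>N \<in> _\<close>]
      by (rule nn_integral_mono) (auto simp: N_def no_occurrence_upto_def split: split_indicator)
    then have "ennreal (prob N) \<le> ennreal ((1 - word_prob p S) ^ j)"
      using no_occurrence_prob_geometric[of S j] by (simp add: emeasure_eq_measure)
    then show ?thesis
      using word_prob_le_1[of S] by (simp add: ennreal_le_iff)
  qed
  have "prob N = 0"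
  proof (rule ccontr)
    assume "prob N \<noteq> 0"
    then have "0 < prob N" by (simp add: less_le)
    moreover have "1 - word_prob p S < 1" using word_prob_pos by simp
    ultimately obtain j where "(1 - word_prob p S) ^ j < prob N" using real_arch_pow_inv by blast
    with prob_N[of j] show False by simp
  qed
  then show ?thesis
    by (simp add: AE_iff_measurable[OF \<open>N \<in> _\<close>] N_def emeasure_eq_measure)
qed

lemma AE_waiting_time:
  "AE \<omega> in coin_space p. length S \<le> waiting_time S \<omega> \<and>
    (\<forall>j. first_occurrence S (snth \<omega>) j \<longleftrightarrow> j = waiting_time S \<omega>) \<and>
    (\<forall>m. no_occurrence_upto S (snth \<omega>) m \<longleftrightarrow> m < waiting_time S \<omega>)"
  using AE_occurs[of S]
  by eventually_elim (simp add: waiting_time_eq_Least length_le_Least_occurs_at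
    first_occurrence_iff_Least no_occurrence_upto_iff_less_Least)

lemma nn_integral_sum_lessThan_waiting_time:
  "(\<integral>\<^sup>+\<omega>. (\<Sum>m<waiting_time S \<omega>. g m) \<partial>coin_space p) = (\<Sum>m. g m * no_occurrence_prob S m)"
proof -
  have "(\<integral>\<^sup>+\<omega>. (\<Sum>m<waiting_time S \<omega>. g m) \<partial>coin_space p) =
      (\<integral>\<^sup>+\<omega>. (\<Sum>m. g m * of_bool (no_occurrence_upto S (snth \<omega>) m)) \<partial>coin_space p)"
    using AE_waiting_time[of S]
  proof (intro nn_integral_cong_AE, eventually_elim)
    case (elim \<omega>)
    then show ?case
      by (subst suminf_finite[of "{..<waiting_time S \<omega>}"]) auto
  qed
  also have "\<dots> = (\<Sum>m. g m * no_occurrence_prob S m)"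
    by (simp add: nn_integral_suminf nn_integral_cmult no_occurrence_prob_def)
  finally show ?thesis .
qed

lemma nn_integral_waiting_time_minus:
  assumes "i \<le> length S"
  shows "(\<integral>\<^sup>+\<omega>. g (waiting_time S \<omega> - i) \<partial>coin_space p) = (\<Sum>m. g m * first_occurrence_prob S (m + i))"
proof -
  have "(\<integral>\<^sup>+\<omega>. g (waiting_time S \<omega> - i) \<partial>coin_space p) =
      (\<integral>\<^sup>+\<omega>. (\<Sum>m. g m * of_bool (first_occurrence S (snth \<omega>) (m + i))) \<partial>coin_space p)"
    using AE_waiting_time[of S]
  proof (intro nn_integral_cong_AE, eventually_elim)
    case (elim \<omega>)
    then have "first_occurrence S (snth \<omega>) (m + i) \<longleftrightarrow> m = waiting_time S \<omega> - i" for m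
      using assms by auto
    then show ?case
      by (subst suminf_finite[of "{waiting_time S \<omega> - i}"]) auto
  qed
  also have "\<dots> = (\<Sum>m. g m * first_occurrence_prob S (m + i))"
    by (simp add: nn_integral_suminf nn_integral_cmult first_occurrence_prob_def)
  finally show ?thesis .
qed

lemma nn_integral_renewal:
  "ennreal (word_prob p S) * (\<integral>\<^sup>+\<omega>. (\<Sum>m<waiting_time S \<omega>. g m) \<partial>coin_space p) =
    (\<Sum>i\<in>overlaps S. ennreal (word_prob p (drop i S)) * (\<integral>\<^sup>+\<omega>. g (waiting_time S \<omega> - i) \<partial>coin_space p))"
proof -
  have "ennreal (word_prob p S) * (\<integral>\<^sup>+\<omega>. (\<Sum>m<waiting_time S \<omega>. g m) \<partial>coin_space p) =
      (\<Sum>m. g m * (no_occurrence_prob S m * ennreal (word_prob p S)))"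
    unfolding nn_integral_sum_lessThan_waiting_time ennreal_suminf_cmult[symmetric]
    by (rule arg_cong[where f = suminf]) (simp add: fun_eq_iff mult_ac)
  also have "\<dots> = (\<Sum>m. \<Sum>i\<in>overlaps S. ennreal (word_prob p (drop i S)) * (g m * first_occurrence_prob S (m + i)))"
    by (simp only: no_occurrence_prob_renewal sum_distrib_left) (simp add: mult_ac)
  also have "\<dots> = (\<Sum>i\<in>overlaps S. \<Sum>m. ennreal (word_prob p (drop i S)) * (g m * first_occurrence_prob S (m + i)))"
    by (rule suminf_sum) simp
  also have "\<dots> = (\<Sum>i\<in>overlaps S. ennreal (word_prob p (drop i S)) * (\<integral>\<^sup>+\<omega>. g (waiting_time S \<omega> - i) \<partial>coin_space p))"
    by (intro sum.cong refl) (simp add: nn_integral_waiting_time_minus overlaps_def)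
  finally show ?thesis .
qed

end

section \<open>Moments of the waiting time\<close>

lemma ennreal_mult_add_sum:
  assumes "0 \<le> a" "0 \<le> x" "\<And>i. i \<in> I \<Longrightarrow> 0 \<le> b i" "\<And>i. i \<in> I \<Longrightarrow> 0 \<le> y i"
  shows "ennreal a * ennreal x + (\<Sum>i\<in>I. ennreal (b i) * ennreal (y i)) =
    ennreal (a * x + (\<Sum>i\<in>I. b i * y i))"
proof -
  have "(\<Sum>i\<in>I. ennreal (b i) * ennreal (y i)) = (\<Sum>i\<in>I. ennreal (b i * y i))"
    using assms by (intro sum.cong) (simp_all add: ennreal_mult)
  also have "\<dots> = ennreal (\<Sum>i\<in>I. b i * y i)"
    using assms by (intro sum_ennreal) simp
  finally show ?thesis
    using assms sum_nonneg[of I "\<lambda>i. b i * y i"] by (simp add: ennreal_mult)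
qed

lemma nn_integral_ennreal_diff_add:
  assumes [measurable]: "u \<in> borel_measurable M" "v \<in> borel_measurable M"
    and "\<And>x. 0 \<le> v x" and "\<And>x. v x \<le> u x"
  shows "(\<integral>\<^sup>+x. ennreal (u x - v x) \<partial>M) + (\<integral>\<^sup>+x. ennreal (v x) \<partial>M) = (\<integral>\<^sup>+x. ennreal (u x) \<partial>M)"
proof -
  have "(\<integral>\<^sup>+x. ennreal (u x - v x) \<partial>M) + (\<integral>\<^sup>+x. ennreal (v x) \<partial>M) =
      (\<integral>\<^sup>+x. ennreal (u x - v x) + ennreal (v x) \<partial>M)"
    by (rule nn_integral_add[symmetric]) simp_all
  also have "\<dots> = (\<integral>\<^sup>+x. ennreal (u x) \<partial>M)"
    using assms(3,4) by (intro nn_integral_cong) (simp add: ennreal_plus[symmetric] del: ennreal_plus)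
  finally show ?thesis .
qed

lemma power_increment_binomial:
  "(x + 1) ^ n - x ^ n = (\<Sum>j<n. real (n choose j) * x ^ j)"
  by (simp add: binomial_ring lessThan_Suc_atMost[symmetric])

lemma sum_lessThan_power_increments:
  fixes c :: real
  assumes "0 \<le> c"
  shows "(\<Sum>m<y. ennreal ((real m + c + 1) ^ n - (real m + c) ^ n)) = ennreal ((real y + c) ^ n - c ^ n)"
proof -
  have "(\<Sum>m<y. ennreal ((real m + c + 1) ^ n - (real m + c) ^ n)) =
      ennreal (\<Sum>m<y. (real m + c + 1) ^ n - (real m + c) ^ n)"
    using assms by (intro sum_ennreal) (simp add: power_mono)
  also have "(\<Sum>m<y. (real m + c + 1) ^ n - (real m + c) ^ n) = (real y + c) ^ n - c ^ n"
    using sum_lessThan_telescope[of "\<lambda>m. (real m + c) ^ n" y] by (simp add: add_ac)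
  finally show ?thesis .
qed

lemma power_one_minus_diff_power_minus:
  "(1 - x) ^ j - (- x) ^ j = (-1) ^ (j - 1) * (x ^ j - (x - 1 :: real) ^ j)"
proof (cases j)
  case (Suc k)
  have "(1 - x) ^ j = (-1) ^ j * (x - 1) ^ j" and "(- x) ^ j = (-1) ^ j * x ^ j"
    by (simp_all add: power_mult_distrib[symmetric])
  moreover have "(-1 :: real) ^ j = - ((-1) ^ (j - 1))"
    using Suc by simp
  ultimately show ?thesis
    by (simp add: algebra_simps)
qed simp

context coin_flips
begin

definition shifted_moment :: "bool list \<Rightarrow> real \<Rightarrow> nat \<Rightarrow> ennreal" where
  "shifted_moment S c n = (\<integral>\<^sup>+\<omega>. ennreal ((real (waiting_time S \<omega>) + c) ^ n) \<partial>coin_space p)"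

definition moment :: "bool list \<Rightarrow> nat \<Rightarrow> real" where
  "moment S n = enn2real (shifted_moment S 0 n)"

lemma shifted_moment_binomial:
  assumes "0 \<le> c"
  shows "shifted_moment S c n = (\<Sum>j\<le>n. ennreal (real (n choose j) * c ^ (n - j)) * shifted_moment S 0 j)"
proof -
  have "ennreal ((real (waiting_time S \<omega>) + c) ^ n) =
      (\<Sum>j\<le>n. ennreal (real (n choose j) * c ^ (n - j)) * ennreal (real (waiting_time S \<omega>) ^ j))" for \<omega>
    using assms by (simp add: binomial_ring ennreal_mult[symmetric] sum_ennreal mult_ac)
  then show ?thesis
    by (simp add: shifted_moment_def nn_integral_sum nn_integral_cmult)
qed

lemma nn_integral_power_increment:
  assumes "0 \<le> c"
  shows "(\<integral>\<^sup>+\<omega>. ennreal ((real (waiting_time S \<omega>) + c + 1) ^ n - (real (waiting_time S \<omega>) + c) ^ n) \<partial>coin_space p) =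
    (\<Sum>j<n. ennreal (real (n choose j)) * shifted_moment S c j)"
proof -
  have "ennreal ((real (waiting_time S \<omega>) + c + 1) ^ n - (real (waiting_time S \<omega>) + c) ^ n) =
      (\<Sum>j<n. ennreal (real (n choose j)) * ennreal ((real (waiting_time S \<omega>) + c) ^ j))" for \<omega>
    using assms by (simp add: power_increment_binomial ennreal_mult[symmetric] sum_ennreal)
  then show ?thesis
    by (simp add: shifted_moment_def nn_integral_sum nn_integral_cmult)
qed

lemma shifted_moment_eq_tail:
  assumes "0 \<le> c"
  shows "shifted_moment S c n =
    (\<integral>\<^sup>+\<omega>. ennreal ((real (waiting_time S \<omega>) + c) ^ n - c ^ n) \<partial>coin_space p) + ennreal (c ^ n)"
  using nn_integral_ennreal_diff_add[of "\<lambda>\<omega>. (real (waiting_time S \<omega>) + c) ^ n" "coin_space p" "\<lambda>_. c ^ n"]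
    assms
  by (simp add: shifted_moment_def power_mono emeasure_space_1[simplified])

lemma shifted_moment_add_1:
  assumes "0 \<le> c"
  shows "shifted_moment S (c + 1) n =
    (\<integral>\<^sup>+\<omega>. ennreal ((real (waiting_time S \<omega>) + c + 1) ^ n - (real (waiting_time S \<omega>) + c) ^ n) \<partial>coin_space p) +
    shifted_moment S c n"
  using nn_integral_ennreal_diff_add[of "\<lambda>\<omega>. (real (waiting_time S \<omega>) + c + 1) ^ n"
      "coin_space p" "\<lambda>\<omega>. (real (waiting_time S \<omega>) + c) ^ n"] assms
  by (simp add: shifted_moment_def power_mono add_ac)

lemma power_increment_renewal:
  "ennreal (word_prob p S) *
      (\<integral>\<^sup>+\<omega>. ennreal ((real (waiting_time S \<omega>) + length S) ^ n - real (length S) ^ n) \<partial>coin_space p) =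
    (\<Sum>i\<in>overlaps S. ennreal (word_prob p (drop i S)) *
      (\<integral>\<^sup>+\<omega>. ennreal ((real (waiting_time S \<omega>) + real (length S - i) + 1) ^ n -
        (real (waiting_time S \<omega>) + real (length S - i)) ^ n) \<partial>coin_space p))"
proof -
  define g where "g m = ennreal ((real m + length S + 1) ^ n - (real m + length S) ^ n)" for m
  have "(\<integral>\<^sup>+\<omega>. ennreal ((real (waiting_time S \<omega>) + length S) ^ n - real (length S) ^ n) \<partial>coin_space p) =
      (\<integral>\<^sup>+\<omega>. (\<Sum>m<waiting_time S \<omega>. g m) \<partial>coin_space p)"
    by (simp add: g_def sum_lessThan_power_increments)
  moreover have "(\<integral>\<^sup>+\<omega>. g (waiting_time S \<omega> - i) \<partial>coin_space p) =
      (\<integral>\<^sup>+\<omega>. ennreal ((real (waiting_time S \<omega>) + real (length S - i) + 1) ^ n -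
        (real (waiting_time S \<omega>) + real (length S - i)) ^ n) \<partial>coin_space p)"
    if "i \<in> overlaps S" for i
  proof (rule nn_integral_cong_AE)
    have "i \<le> length S" using that by (simp add: overlaps_def)
    show "AE \<omega> in coin_space p. g (waiting_time S \<omega> - i) =
        ennreal ((real (waiting_time S \<omega>) + real (length S - i) + 1) ^ n -
          (real (waiting_time S \<omega>) + real (length S - i)) ^ n)"
      using AE_waiting_time[of S]
    proof eventually_elim
      case (elim \<omega>)
      with \<open>i \<le> length S\<close> show ?case by (simp add: g_def of_nat_diff algebra_simps)
    qed
  qed
  ultimately show ?thesis
    by (simp add: nn_integral_renewal)
qed

lemma shifted_moment_renewal:
  "ennreal (word_prob p S) * shifted_moment S (length S) n +
      (\<Sum>i\<in>overlaps S. ennreal (word_prob p (drop i S)) * shifted_moment S (length S - i) n) =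
    ennreal (word_prob p S * real (length S) ^ n) +
      (\<Sum>i\<in>overlaps S. ennreal (word_prob p (drop i S)) * shifted_moment S (real (length S - i) + 1) n)"
proof -
  define X where "X = (\<integral>\<^sup>+\<omega>. ennreal ((real (waiting_time S \<omega>) + length S) ^ n - real (length S) ^ n) \<partial>coin_space p)"
  define D where "D i = (\<integral>\<^sup>+\<omega>. ennreal ((real (waiting_time S \<omega>) + real (length S - i) + 1) ^ n -
    (real (waiting_time S \<omega>) + real (length S - i)) ^ n) \<partial>coin_space p)" for i
  have X: "shifted_moment S (length S) n = X + ennreal (real (length S) ^ n)"
    unfolding X_def by (rule shifted_moment_eq_tail) simp
  have D: "D i + shifted_moment S (length S - i) n = shifted_moment S (real (length S - i) + 1) n" for i
    unfolding D_def by (rule shifted_moment_add_1[symmetric]) simp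
  have "ennreal (word_prob p S) * X = (\<Sum>i\<in>overlaps S. ennreal (word_prob p (drop i S)) * D i)"
    unfolding X_def D_def by (rule power_increment_renewal)
  then have "ennreal (word_prob p S) * shifted_moment S (length S) n +
      (\<Sum>i\<in>overlaps S. ennreal (word_prob p (drop i S)) * shifted_moment S (length S - i) n) =
    ennreal (word_prob p S * real (length S) ^ n) +
      (\<Sum>i\<in>overlaps S. ennreal (word_prob p (drop i S)) * (D i + shifted_moment S (length S - i) n))"
    using word_prob_pos[of S]
    by (simp add: X distrib_left sum.distrib ennreal_mult add_ac)
  then show ?thesis
    by (simp only: D)
qed

lemma shifted_moment_mono: "0 \<le> c \<Longrightarrow> c \<le> d \<Longrightarrow> shifted_moment S c n \<le> shifted_moment S d n"
  unfolding shifted_moment_def by (intro nn_integral_mono ennreal_leI power_mono) auto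

lemma shifted_moment_0_less_top: "shifted_moment S 0 n < \<top>"
proof (induction n rule: less_induct)
  case (less n)
  have lower: "shifted_moment S c j < \<top>" if "j < n" and "0 \<le> c" for j c
    using less that by (simp add: shifted_moment_binomial[OF \<open>0 \<le> c\<close>] ennreal_mult_less_top)
  define X where "X = (\<integral>\<^sup>+\<omega>. ennreal ((real (waiting_time S \<omega>) + length S) ^ n - real (length S) ^ n) \<partial>coin_space p)"
  have "ennreal (word_prob p S) * X < \<top>"
    unfolding X_def power_increment_renewal
    by (simp add: nn_integral_power_increment lower ennreal_mult_less_top)
  then have "X < \<top>"
    using word_prob_pos[of S] by (auto simp: ennreal_mult_less_top)
  then have "shifted_moment S (length S) n < \<top>"
    by (simp add: shifted_moment_eq_tail X_def)
  then show ?case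
    using shifted_moment_mono[of 0 "length S" S n] by simp
qed

lemma shifted_moment_eq_moment_shift:
  assumes "0 \<le> c"
  shows "shifted_moment S c n = ennreal (moment_shift (moment S) c n)"
proof -
  have "shifted_moment S c n = (\<Sum>j\<le>n. ennreal (real (n choose j) * c ^ (n - j)) * ennreal (moment S j))"
    unfolding shifted_moment_binomial[OF assms] moment_def
    using shifted_moment_0_less_top by (simp add: ennreal_enn2real)
  also have "\<dots> = (\<Sum>j\<le>n. ennreal (real (n choose j) * moment S j * c ^ (n - j)))"
    using assms by (intro sum.cong) (simp_all add: ennreal_mult moment_def mult_ac)
  also have "\<dots> = ennreal (moment_shift (moment S) c n)"
    unfolding moment_shift_def using assms by (intro sum_ennreal) (simp add: moment_def)
  finally show ?thesis .
qed

lemma moment_shift_nonneg: "0 \<le> c \<Longrightarrow> 0 \<le> moment_shift (moment S) c n"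
  by (simp add: moment_shift_def moment_def sum_nonneg)

lemma moment_shift_renewal:
  "word_prob p S * moment_shift (moment S) (length S) n +
      (\<Sum>i\<in>overlaps S. word_prob p (drop i S) * moment_shift (moment S) (length S - i) n) =
    word_prob p S * real (length S) ^ n +
      (\<Sum>i\<in>overlaps S. word_prob p (drop i S) * moment_shift (moment S) (real (length S - i) + 1) n)"
proof -
  let ?L = "word_prob p S * moment_shift (moment S) (length S) n +
    (\<Sum>i\<in>overlaps S. word_prob p (drop i S) * moment_shift (moment S) (length S - i) n)"
  let ?R = "word_prob p S * real (length S) ^ n +
    (\<Sum>i\<in>overlaps S. word_prob p (drop i S) * moment_shift (moment S) (real (length S - i) + 1) n)"
  have nonneg: "0 \<le> word_prob p xs" for xs
    using word_prob_pos less_imp_le by blast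
  have "ennreal ?L = ennreal ?R"
    using shifted_moment_renewal[of S n] nonneg
    by (simp add: shifted_moment_eq_moment_shift ennreal_mult_add_sum[symmetric] moment_shift_nonneg
      ennreal_mult del: ennreal_plus)
  moreover have "0 \<le> ?L" and "0 \<le> ?R"
    using nonneg by (auto intro!: add_nonneg_nonneg sum_nonneg mult_nonneg_nonneg moment_shift_nonneg)
  ultimately show ?thesis
    using ennreal_inj by blast
qed

definition renewal_series :: "bool list \<Rightarrow> real fps" where
  "renewal_series S = fps_const (word_prob p S) * fps_exp (length S) -
    (\<Sum>i\<in>overlaps S. fps_const (word_prob p (drop i S)) *
      (fps_exp (real (length S - i) + 1) - fps_exp (length S - i)))"

lemma egf_moment_renewal_series:
  "egf (moment S) * renewal_series S = fps_const (word_prob p S) * fps_exp (length S)"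
proof (rule fps_ext)
  fix n
  let ?m = "moment_shift (moment S)"
  have "egf (moment S) * renewal_series S = fps_const (word_prob p S) * egf (?m (length S)) -
      (\<Sum>i\<in>overlaps S. fps_const (word_prob p (drop i S)) *
        (egf (?m (real (length S - i) + 1)) - egf (?m (length S - i))))"
    unfolding renewal_series_def egf_mult_fps_exp[symmetric]
    by (simp add: right_diff_distrib sum_distrib_left mult_ac)
  then have "fps_nth (egf (moment S) * renewal_series S) n =
      (word_prob p S * ?m (length S) n + (\<Sum>i\<in>overlaps S. word_prob p (drop i S) * ?m (length S - i) n) -
        (\<Sum>i\<in>overlaps S. word_prob p (drop i S) * ?m (real (length S - i) + 1) n)) / fact n"
    by (simp add: fps_sum_nth sum_subtractf right_diff_distrib diff_divide_distrib add_divide_distrib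
      sum_divide_distrib)
  also have "\<dots> = word_prob p S * real (length S) ^ n / fact n"
    by (simp add: moment_shift_renewal)
  finally show "fps_nth (egf (moment S) * renewal_series S) n =
      fps_nth (fps_const (word_prob p S) * fps_exp (length S)) n"
    by simp
qed

definition overlap_coeff :: "bool list \<Rightarrow> nat \<Rightarrow> real" where
  "overlap_coeff S j = (\<Sum>i\<in>overlaps S. ((1 - real i) ^ j - (- real i) ^ j) / word_prob p (take i S))"

lemma one_minus_egf_overlap_coeff:
  "(1 - egf (overlap_coeff S)) * (fps_const (word_prob p S) * fps_exp (length S)) = renewal_series S"
proof -
  have "egf (overlap_coeff S) =
      (\<Sum>i\<in>overlaps S. fps_const (1 / word_prob p (take i S)) * (fps_exp (1 - real i) - fps_exp (- real i)))"
    by (rule fps_ext) (simp add: overlap_coeff_def fps_sum_nth diff_divide_distrib sum_divide_distrib mult.commute)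
  moreover have "fps_const (1 / word_prob p (take i S)) * (fps_exp (1 - real i) - fps_exp (- real i)) *
      (fps_const (word_prob p S) * fps_exp (length S)) =
    fps_const (word_prob p (drop i S)) * (fps_exp (real (length S - i) + 1) - fps_exp (length S - i))"
    if "i \<in> overlaps S" for i
  proof -
    have "word_prob p S / word_prob p (take i S) = word_prob p (drop i S)"
      using word_prob_append[of p "take i S" "drop i S"] word_prob_pos[of "take i S"] by simp
    then have const: "fps_const (1 / word_prob p (take i S)) * fps_const (word_prob p S) =
        fps_const (word_prob p (drop i S))"
      by (simp flip: fps_const_mult)
    have "(1 - real i) + length S = real (length S - i) + 1" and "- real i + length S = length S - i"
      using that by (auto simp: overlaps_def)
    then have exp: "(fps_exp (1 - real i) - fps_exp (- real i)) * fps_exp (length S) =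
        fps_exp (real (length S - i) + 1) - fps_exp (length S - i)"
      by (simp only: left_diff_distrib fps_exp_add_mult[symmetric])
    have "fps_const (1 / word_prob p (take i S)) * (fps_exp (1 - real i) - fps_exp (- real i)) *
        (fps_const (word_prob p S) * fps_exp (length S)) =
      (fps_const (1 / word_prob p (take i S)) * fps_const (word_prob p S)) *
        ((fps_exp (1 - real i) - fps_exp (- real i)) * fps_exp (length S))"
      by (simp only: mult_ac)
    then show ?thesis
      by (simp only: const exp)
  qed
  ultimately show ?thesis
    unfolding renewal_series_def by (simp add: left_diff_distrib sum_distrib_right)
qed

lemma moment_eq_ordered_partition_sum:
  "moment S n = ordered_partition_sum (overlap_coeff S) {1..n}"
proof -
  define F where "F n = ordered_partition_sum (overlap_coeff S) {1..n}" for n :: nat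
  have "egf F * (1 - egf (overlap_coeff S)) = 1"
    unfolding F_def by (rule egf_ordered_partition_sum) (simp add: overlap_coeff_def)
  then have "egf F * renewal_series S = fps_const (word_prob p S) * fps_exp (length S)"
    unfolding one_minus_egf_overlap_coeff[symmetric] mult.assoc[symmetric] by simp
  moreover have "renewal_series S \<noteq> 0"
  proof
    assume "renewal_series S = 0"
    then have "fps_nth (renewal_series S) 0 = 0" by simp
    then show False
      using word_prob_pos[of S] by (simp add: renewal_series_def fps_sum_nth)
  qed
  ultimately have "egf (moment S) = egf F"
    using egf_moment_renewal_series[of S] mult_cancel_right by metis
  then show ?thesis by (simp add: egf_inject fun_eq_iff F_def)
qed

theorem nn_integral_waiting_time_power:
  "(\<integral>\<^sup>+\<omega>. ennreal (real (waiting_time S \<omega>) ^ n) \<partial>coin_space p) =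
    ennreal (\<Sum>P\<in>set_partitions n. (-1) ^ (n - card P) * fact (card P) *
      (\<Prod>B\<in>P. \<Sum>i\<in>overlaps S. (real i ^ card B - real (i - 1) ^ card B) / word_prob p (take i S)))"
proof -
  have coeff: "overlap_coeff S = (\<lambda>j. (-1) ^ (j - 1) *
      (\<Sum>i\<in>overlaps S. (real i ^ j - real (i - 1) ^ j) / word_prob p (take i S)))"
    unfolding overlap_coeff_def sum_distrib_left fun_eq_iff
    by (intro allI sum.cong refl) (auto simp: overlaps_def of_nat_diff power_one_minus_diff_power_minus)
  have "(\<integral>\<^sup>+\<omega>. ennreal (real (waiting_time S \<omega>) ^ n) \<partial>coin_space p) = ennreal (moment S n)"
    using shifted_moment_0_less_top[of S n] by (simp add: moment_def shifted_moment_def ennreal_enn2real)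
  then show ?thesis
    unfolding moment_eq_ordered_partition_sum coeff ordered_partition_sum_alternating[symmetric] .
qed

end

theorem corollary4p12:
  fixes p :: real and k l n :: nat
  assumes "0 < p" and "p < 1" and "n \<ge> 1"
  shows "(k \<ge> 1 \<longrightarrow>
           (\<integral>\<^sup>+ \<omega>. ennreal (real (waiting_time (replicate k True) \<omega>) ^ n) \<partial>coin_space p)
           = ennreal (\<Sum>P\<in>set_partitions n. (-1) ^ (n - card P) * fact (card P) *
                (\<Prod>B\<in>P. \<Sum>i=1..k. (real i ^ card B - real (i - 1) ^ card B) / p ^ i)))
       \<and> (k \<ge> 1 \<and> l \<ge> 1 \<longrightarrow>
           (\<integral>\<^sup>+ \<omega>. ennreal (real (waiting_time (replicate k True @ replicate l False) \<omega>) ^ n) \<partial>coin_space p)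
           = ennreal (\<Sum>P\<in>set_partitions n. (-1) ^ (n - card P) * fact (card P) *
                (\<Prod>B\<in>P. (real (k + l) ^ card B - real (k + l - 1) ^ card B) / (p ^ k * (1 - p) ^ l))))"
proof -
  \<comment> \<open>The general formula holds for every \<open>n\<close>.\<close>
  interpret coin_flips p
    using assms(1,2) by unfold_locales
  show ?thesis
  proof (intro conjI impI)
    show "(\<integral>\<^sup>+ \<omega>. ennreal (real (waiting_time (replicate k True) \<omega>) ^ n) \<partial>coin_space p)
        = ennreal (\<Sum>P\<in>set_partitions n. (-1) ^ (n - card P) * fact (card P) *
            (\<Prod>B\<in>P. \<Sum>i=1..k. (real i ^ card B - real (i - 1) ^ card B) / p ^ i))"
      using nn_integral_waiting_time_power[of "replicate k True" n]
      by (simp add: overlaps_replicate word_prob_def)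
  next
    assume "k \<ge> 1 \<and> l \<ge> 1"
    then show "(\<integral>\<^sup>+ \<omega>. ennreal (real (waiting_time (replicate k True @ replicate l False) \<omega>) ^ n) \<partial>coin_space p)
        = ennreal (\<Sum>P\<in>set_partitions n. (-1) ^ (n - card P) * fact (card P) *
            (\<Prod>B\<in>P. (real (k + l) ^ card B - real (k + l - 1) ^ card B) / (p ^ k * (1 - p) ^ l)))"
      using nn_integral_waiting_time_power[of "replicate k True @ replicate l False" n]
      by (simp add: overlaps_replicate_append_replicate word_prob_def)
  qed
qed

end
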